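(* Let $d\ge2$, $p\in[1,\infty)$ and $f\in W^{1,\infty}(\mathbb{R}^d)$ real-valued. Set $\lambda_n=\frac{11}{8}2^n$ and $t_n=\frac{8}{11}\pi n2^{-n}$. Then there is $N_0\in\mathbb{N}^+$ such that for all sufficiently large $n$, $$\big\|\cos\big(\lambda_n(x_1-t_nf(x))\big)\big\|_{L^p([0,2\pi2^{-N_0}]^d)}\ge 2^{-\frac dpN_0-2},$$ where $x=(x_1,\dots,x_d)$. *)

theory Defs
  imports "HOL-Analysis.Analysis"
begin

text \<open>Real-valued W^{1,\<infinity>}(R^d), identified with the space of bounded Lipschitz functions
  (every W^{1,\<infinity>} class has a unique bounded Lipschitz representative, and conversely).\<close>
definition W1_infinity :: "('a::euclidean_space \<Rightarrow> real) \<Rightarrow> bool" where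
  "W1_infinity f \<longleftrightarrow> bounded (range f) \<and> (\<exists>L. L-lipschitz_on UNIV f)"

definition Lp_norm_on :: "real \<Rightarrow> ('a::euclidean_space) set \<Rightarrow> ('a \<Rightarrow> real) \<Rightarrow> real" where
  "Lp_norm_on p A g = (LINT x:A|lborel. \<bar>g x\<bar> powr p) powr (1/p)"

end

theory Submission
  imports Defs "HOL-Real_Asymp.Real_Asymp"
begin

(* Shifting x by h = pi/(2 lam) along the i-th axis advances the phase lam (x_i - t f x) by pi/2,
   up to an error of at most lam |t| L h = |t| L pi/2, which is small since t = t_n tends to 0.
   As cos phi and cos (phi + pi/2 + eps) ~ -sin phi cannot both be small, the values of |cos|^p
   at x and at x + h e_i sum to at least 2^-p.  Integrating over the cube [0,pi]^d (and using
   that its part shifted by h e_i still has volume at least 1) gives the integral of |cos|^p at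
   least 2^(-p-1), so N0 = 1 already works. *)

lemma abs_sin_diff_le: "\<bar>sin u - sin v\<bar> \<le> \<bar>u - v\<bar>" for u v :: real
proof -
  have "\<bar>sin u - sin v\<bar> = 2 * \<bar>sin ((u - v) / 2)\<bar> * \<bar>cos ((u + v) / 2)\<bar>"
    unfolding sin_diff_sin abs_mult by simp
  also have "\<dots> \<le> 2 * \<bar>(u - v) / 2\<bar> * 1"
    by (intro mult_left_mono mult_mono abs_sin_x_le_abs_x abs_cos_le_one) auto
  finally show ?thesis by simp
qed

lemma cos_quarter_shift_ge_half:
  fixes phi eps :: real
  assumes "\<bar>eps\<bar> \<le> 1/5"
  shows "1/2 \<le> \<bar>cos phi\<bar> \<or> 1/2 \<le> \<bar>cos (phi + pi/2 + eps)\<bar>"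
proof (cases "1/2 \<le> \<bar>cos phi\<bar>")
  case False
  then have "\<bar>cos phi\<bar>^2 < (1/2)^2" by (intro power_strict_mono) auto
  then have "(7/10)^2 < \<bar>sin phi\<bar>^2"
    using sin_cos_squared_add[of phi] by (simp add: power2_eq_square)
  then have "7/10 < \<bar>sin phi\<bar>" by (rule power2_less_imp_less) simp
  moreover have "\<bar>sin (phi + eps) - sin phi\<bar> \<le> \<bar>eps\<bar>"
    using abs_sin_diff_le[of "phi + eps" phi] by simp
  moreover have "cos (phi + pi/2 + eps) = - sin (phi + eps)"
    by (simp add: cos_add sin_add add.commute add.left_commute)
  ultimately show ?thesis using assms by linarith
qed simp

lemma integral_shift_sum_le:
  fixes g :: "'a::euclidean_space \<Rightarrow> real"
  assumes g_cont: "continuous_on (cbox a b) g"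
    and g_nonneg: "\<And>x. x \<in> cbox a b \<Longrightarrow> 0 \<le> g x"
    and c_nonneg: "\<And>j. j \<in> Basis \<Longrightarrow> 0 \<le> c \<bullet> j"
    and lower: "\<And>x. x \<in> cbox a (b - c) \<Longrightarrow> m \<le> g x + g (x + c)"
  shows "m * Henstock_Kurzweil_Integration.content (cbox a (b - c)) \<le> 2 * integral (cbox a b) g"
proof -
  let ?Q = "cbox a (b - c)"
  have sub_left: "?Q \<subseteq> cbox a b" and sub_right: "cbox (a + c) b \<subseteq> cbox a b"
    using c_nonneg by (auto simp: subset_box inner_diff_left inner_add_left)
  have int: "g integrable_on cbox u v" if "cbox u v \<subseteq> cbox a b" for u v
    using that by (intro integrable_continuous continuous_on_subset[OF g_cont])
  have shift: "((\<lambda>x. g (x + c)) has_integral integral (cbox (a + c) b) g) ?Q"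
    using has_integral_shift_cbox_iff[where f = g and c = c and a = a and b = "b - c"]
      int[OF sub_right]
    by (simp add: o_def add.commute integrable_integral)
  have "m * Henstock_Kurzweil_Integration.content ?Q = integral ?Q (\<lambda>x. m)" by simp
  also have "\<dots> \<le> integral ?Q (\<lambda>x. g x + g (x + c))"
    using lower int[OF sub_left] shift by (intro integral_le integrable_add) auto
  also have "\<dots> = integral ?Q g + integral (cbox (a + c) b) g"
    using int[OF sub_left] shift
    by (simp add: integral_add integral_unique has_integral_integrable)
  also have "\<dots> \<le> integral (cbox a b) g + integral (cbox a b) g"
    using sub_left sub_right int g_nonneg
    by (intro add_mono integral_subset_le) auto
  finally show ?thesis by simp
qed

lemma Lp_norm_on_cbox_eq_integral:
  fixes g :: "'a::euclidean_space \<Rightarrow> real"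
  assumes "continuous_on (cbox a b) g" and "0 < p"
  shows "Lp_norm_on p (cbox a b) g = integral (cbox a b) (\<lambda>x. \<bar>g x\<bar> powr p) powr (1/p)"
proof -
  have "continuous_on (cbox a b) (\<lambda>x. \<bar>g x\<bar> powr p)"
    using assms by (intro continuous_on_powr' continuous_intros) auto
  then have "set_integrable lborel (cbox a b) (\<lambda>x. \<bar>g x\<bar> powr p)"
    unfolding set_integrable_def by (intro borel_integrable_compact) auto
  then show ?thesis
    unfolding Lp_norm_on_def by (simp add: set_borel_integral_eq_integral)
qed

lemma content_shifted_cube_ge_1:
  fixes i :: "'n::finite" and h :: real
  assumes "0 \<le> h" "h \<le> pi/2"
  shows "1 \<le> Henstock_Kurzweil_Integration.content (cbox 0 ((\<chi> j. pi) - axis i h))"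
proof -
  have side: "1 \<le> ((\<chi> j. pi) - axis i h) $ j" for j :: 'n
    using assms pi_gt3 by (simp add: axis_def)
  then have "cbox 0 ((\<chi> j. pi) - axis i h) \<noteq> {}"
    unfolding interval_ne_empty_cart zero_index using order.trans[OF zero_le_one side] by blast
  then show ?thesis
    using side by (simp add: content_cbox_cart prod_ge_1)
qed

lemma abs_cos_phase_shift_powr_ge:
  fixes f :: "real^'n \<Rightarrow> real" and i :: 'n
  assumes lip: "L-lipschitz_on UNIV f" and p: "0 \<le> p" and lam: "0 < lam"
    and small: "\<bar>t\<bar> * L * pi \<le> 2/5"
  defines "phase \<equiv> \<lambda>x. lam * (x $ i - t * f x)"
  shows "(1/2) powr p
    \<le> \<bar>cos (phase x)\<bar> powr p + \<bar>cos (phase (x + axis i (pi / (2 * lam))))\<bar> powr p"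
proof -
  define h where "h = pi / (2 * lam)"
  define eps where "eps = lam * t * (f x - f (x + axis i h))"
  have lam_h: "lam * h = pi/2"
    using lam by (simp add: h_def)
  have phase_shift: "phase (x + axis i h) = phase x + pi/2 + eps"
    using lam_h unfolding phase_def eps_def by (simp add: algebra_simps)
  have "0 \<le> h"
    using lam by (simp add: h_def)
  then have "norm (axis i h) = h"
    by (simp add: norm_eq_sqrt_inner inner_axis_axis)
  then have "\<bar>f x - f (x + axis i h)\<bar> \<le> L * h"
    using lipschitz_onD[OF lip, of x "x + axis i h"] by (simp add: dist_norm)
  then have "\<bar>eps\<bar> \<le> \<bar>lam * t\<bar> * (L * h)"
    unfolding eps_def by (simp add: abs_mult mult_left_mono)
  also have "\<dots> = \<bar>t\<bar> * L * pi / 2"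
    using lam lam_h by (simp add: abs_mult)
  finally have "\<bar>eps\<bar> \<le> 1/5"
    using small by linarith
  moreover have "(1/2) powr p \<le> \<bar>y\<bar> powr p" if "1/2 \<le> \<bar>y\<bar>" for y :: real
    using that p by (intro powr_mono2) auto
  ultimately show ?thesis
    using cos_quarter_shift_ge_half[of eps "phase x"]
    unfolding phase_shift[unfolded h_def] by (smt (verit) powr_ge_zero)
qed

lemma integral_abs_cos_phase_powr_ge:
  fixes f :: "real^'n \<Rightarrow> real" and i :: 'n
  assumes lip: "L-lipschitz_on UNIV f" and p: "0 < p" and lam: "1 \<le> lam"
    and small: "\<bar>t\<bar> * L * pi \<le> 2/5"
  shows "2 powr (- p - 1)
    \<le> integral (cbox 0 (\<chi> j. pi)) (\<lambda>x. \<bar>cos (lam * (x $ i - t * f x))\<bar> powr p)"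
    (is "_ \<le> integral ?Q ?g")
proof -
  define c :: "real^'n" where "c = axis i (pi / (2 * lam))"
  let ?content = "Henstock_Kurzweil_Integration.content (cbox 0 ((\<chi> j. pi) - c))"
  have "continuous_on UNIV ?g"
    using p lipschitz_on_continuous_on[OF lip]
    by (intro continuous_on_powr' continuous_intros) auto
  moreover have "0 \<le> c \<bullet> j" if "j \<in> Basis" for j
    using that lam by (auto simp: c_def Basis_vec_def inner_axis_axis)
  ultimately have shift_bound: "(1/2) powr p * ?content \<le> 2 * integral ?Q ?g"
    using abs_cos_phase_shift_powr_ge[OF lip _ _ small] p lam unfolding c_def
    by (intro integral_shift_sum_le) (auto intro: continuous_on_subset)
  have content_ge: "1 \<le> ?content"
    unfolding c_def using lam by (intro content_shifted_cube_ge_1) (auto simp: field_simps)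
  have "2 powr (- p - 1) = (1/2) powr p / 2"
    by (simp add: powr_diff powr_minus_divide powr_divide)
  also have "\<dots> \<le> (1/2) powr p * ?content / 2"
    using mult_left_mono[OF content_ge, of "(1/2) powr p"] by simp
  also have "\<dots> \<le> integral ?Q ?g"
    using shift_bound by simp
  finally show ?thesis .
qed

lemma Lp_norm_cos_phase_ge:
  fixes f :: "real^'n \<Rightarrow> real" and i :: 'n
  assumes lip: "L-lipschitz_on UNIV f" and p: "0 < p" and lam: "1 \<le> lam"
    and small: "\<bar>t\<bar> * L * pi \<le> 2/5"
  shows "2 powr (- 1 - 1/p)
    \<le> Lp_norm_on p (cbox 0 (\<chi> j. pi)) (\<lambda>x. cos (lam * (x $ i - t * f x)))"
proof -
  have "2 powr (- 1 - 1/p) = (2 powr (- p - 1)) powr (1/p)"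
    using p by (simp add: powr_powr field_simps)
  also have "\<dots> \<le> integral (cbox 0 (\<chi> j. pi))
      (\<lambda>x. \<bar>cos (lam * (x $ i - t * f x))\<bar> powr p) powr (1/p)"
    using p integral_abs_cos_phase_powr_ge[OF lip p lam small] by (intro powr_mono2) auto
  also have "\<dots> = Lp_norm_on p (cbox 0 (\<chi> j. pi)) (\<lambda>x. cos (lam * (x $ i - t * f x)))"
    using p continuous_on_subset[OF lipschitz_on_continuous_on[OF lip]]
    by (subst Lp_norm_on_cbox_eq_integral) (auto intro!: continuous_intros)
  finally show ?thesis .
qed

theorem lemma3p5:
  fixes f :: "real^'n \<Rightarrow> real" and p :: real and i :: 'n
  assumes "CARD('n) \<ge> 2" and "p \<ge> 1" and "W1_infinity f"
  shows "\<exists>N0::nat. N0 \<ge> 1 \<and>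
    (\<forall>\<^sub>F n in sequentially.
       Lp_norm_on p (cbox 0 (\<chi> j. 2 * pi * 2 powr (- real N0)))
         (\<lambda>x. cos ((11/8 * 2 ^ n) * (x $ i - (8/11 * pi * real n * 2 powr (- real n)) * f x)))
       \<ge> 2 powr (- (real CARD('n) / p) * real N0 - 2))"
proof -
  obtain L where lip: "L-lipschitz_on UNIV f"
    using assms(3) unfolding W1_infinity_def by blast
  define t where "t n = 8/11 * pi * real n * 2 powr (- real n)" for n
  have "t \<longlonglongrightarrow> 0"
    unfolding t_def by real_asymp
  then have "(\<lambda>n. \<bar>t n\<bar> * L * pi) \<longlonglongrightarrow> 0"
    by (intro tendsto_mult_left_zero tendsto_rabs_zero)
  then have small: "\<forall>\<^sub>F n in sequentially. \<bar>t n\<bar> * L * pi < 2/5"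
    by (rule order_tendstoD(2)) simp
  have "1/p \<le> 1" "0 \<le> real CARD('n) / p"
    using assms(2) by auto
  then have exponent: "2 powr (- (real CARD('n) / p) * 1 - 2) \<le> 2 powr (- 1 - 1/p)"
    by simp
  have lam: "1 \<le> 11/8 * (2::real) ^ n" for n
    using one_le_power[of "2::real" n] by linarith
  have bound: "2 powr (- (real CARD('n) / p) * 1 - 2)
      \<le> Lp_norm_on p (cbox 0 (\<chi> j. pi)) (\<lambda>x. cos ((11/8 * 2 ^ n) * (x $ i - t n * f x)))"
    if "\<bar>t n\<bar> * L * pi < 2/5" for n
    using assms(2) that
    by (intro order.trans[OF exponent] Lp_norm_cos_phase_ge[OF lip _ lam]) auto
  have cube: "(\<chi> j. 2 * pi * 2 powr (- 1)) = (\<chi> j::'n. pi)"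
    by (simp add: powr_minus)
  show ?thesis
    using eventually_mono[OF small bound] unfolding t_def
    by (intro exI[of _ 1]) (simp add: cube)
qed

end
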